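(* Every sequent provable in the calculus $\mathsf{G4iSLt}+(\mathrm{cut})$ is provable in $\mathsf{G4iSLt}$; i.e. the additive cut rule is eliminable from $\mathsf{G4iSLt}+(\mathrm{cut})$.
   Context: Formulas are built by the grammar $\varphi ::= p \mid \bot \mid \varphi\land\varphi \mid \varphi\lor\varphi \mid \varphi\to\varphi \mid \Box\varphi$, with $p$ ranging over a countably infinite set of propositional variables. For a multiset $\Gamma$, $\Box\Gamma=\{\Box\psi:\psi\in\Gamma\}$; a boxed formula is one of the form $\Box\psi$. A sequent is $\Gamma\Rightarrow\chi$ with $\Gamma$ a finite multiset of formulas and $\chi$ a formula. The sequent calculus $\mathsf{G4iSLt}$ has the following rules, where $p$ is a propositional variable and $\Phi$ always denotes a multiset containing no boxed formula: (⊥L) $\bot,\Gamma\Rightarrow\chi$ (no premise); (IdP) $\Gamma,p\Rightarrow p$ (no premise); (∧L) from $\Gamma,\varphi,\psi\Rightarrow\chi$ infer $\Gamma,\varphi\land\psi\Rightarrow\chi$; (∧R) from $\Gamma\Rightarrow\varphi$ and $\Gamma\Rightarrow\psi$ infer $\Gamma\Rightarrow\varphi\land\psi$; (∨L) from $\Gamma,\varphi\Rightarrow\chi$ and $\Gamma,\psi\Rightarrow\chi$ infer $\Gamma,\varphi\lor\psi\Rightarrow\chi$; (∨R$_i$), $i\in\{1,2\}$: from $\Gamma\Rightarrow\varphi_i$ infer $\Gamma\Rightarrow\varphi_1\lor\varphi_2$; (p→L) from $\Gamma,p,\varphi\Rightarrow\chi$ infer $\Gamma,p,p\to\varphi\Rightarrow\chi$;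 (→R) from $\Gamma,\varphi\Rightarrow\psi$ infer $\Gamma\Rightarrow\varphi\to\psi$; (□→L) from $\Phi,\Gamma,\psi,\Box\varphi\Rightarrow\varphi$ and $\Phi,\Box\Gamma,\psi\Rightarrow\chi$ infer $\Phi,\Box\Gamma,\Box\varphi\to\psi\Rightarrow\chi$; (SLtR) from $\Phi,\Gamma,\Box\varphi\Rightarrow\varphi$ infer $\Phi,\Box\Gamma\Rightarrow\Box\varphi$; (∧→L) from $\Gamma,\varphi\to(\psi\to\chi)\Rightarrow\delta$ infer $\Gamma,(\varphi\land\psi)\to\chi\Rightarrow\delta$; (∨→L) from $\Gamma,\varphi\to\chi,\psi\to\chi\Rightarrow\delta$ infer $\Gamma,(\varphi\lor\psi)\to\chi\Rightarrow\delta$; (→→L) from $\Gamma,\psi\to\chi\Rightarrow\varphi\to\psi$ and $\Gamma,\chi\Rightarrow\delta$ infer $\Gamma,(\varphi\to\psi)\to\chi\Rightarrow\delta$. A proof of a sequent $S$ is a finite tree of sequents with root $S$ in which each interior node together with its children forms an instance of a rule (conclusion, premises) and each leaf is the conclusion of a premise-free rule; $S$ is provable if it has a proof. The calculus $\mathsf{G4iSLt}+(\mathrm{cut})$ consists of all rules of $\mathsf{G4iSLt}$ together with the additive cut rule: from $\Gamma\Rightarrow\varphi$ and $\varphi,\Gamma\Rightarrow\chi$ infer $\Gamma\Rightarrow\chi$ (for arbitrary finite multiset $\Gamma$ and formulas $\varphi,\chi$). *)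

theory Defs
  imports Main "HOL-Library.Multiset"
begin

datatype fm = Var nat | Bot | And fm fm | Or fm fm | Imp fm fm | Box fm

definition is_boxed :: "fm \<Rightarrow> bool" where
  "is_boxed A \<longleftrightarrow> (\<exists>B. A = Box B)"

definition box_free :: "fm multiset \<Rightarrow> bool" where
  "box_free \<Phi> \<longleftrightarrow> (\<forall>A\<in>#\<Phi>. \<not> is_boxed A)"

abbreviation boxes :: "fm multiset \<Rightarrow> fm multiset" where
  "boxes \<Gamma> \<equiv> image_mset Box \<Gamma>"

inductive G4iSLt :: "fm multiset \<Rightarrow> fm \<Rightarrow> bool" where
  BotL: "G4iSLt (add_mset Bot \<Gamma>) C"
| IdP: "G4iSLt (add_mset (Var p) \<Gamma>) (Var p)"
| AndL: "G4iSLt (add_mset A (add_mset B \<Gamma>)) C \<Longrightarrow> G4iSLt (add_mset (And A B) \<Gamma>) C"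
| AndR: "G4iSLt \<Gamma> A \<Longrightarrow> G4iSLt \<Gamma> B \<Longrightarrow> G4iSLt \<Gamma> (And A B)"
| OrL: "G4iSLt (add_mset A \<Gamma>) C \<Longrightarrow> G4iSLt (add_mset B \<Gamma>) C \<Longrightarrow> G4iSLt (add_mset (Or A B) \<Gamma>) C"
| OrR1: "G4iSLt \<Gamma> A \<Longrightarrow> G4iSLt \<Gamma> (Or A B)"
| OrR2: "G4iSLt \<Gamma> B \<Longrightarrow> G4iSLt \<Gamma> (Or A B)"
| VarImpL: "G4iSLt (add_mset (Var p) (add_mset A \<Gamma>)) C \<Longrightarrow>
            G4iSLt (add_mset (Var p) (add_mset (Imp (Var p) A) \<Gamma>)) C"
| ImpR: "G4iSLt (add_mset A \<Gamma>) B \<Longrightarrow> G4iSLt \<Gamma> (Imp A B)"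
| BoxImpL: "box_free \<Phi> \<Longrightarrow>
            G4iSLt (\<Phi> + \<Gamma> + {#B, Box A#}) A \<Longrightarrow>
            G4iSLt (\<Phi> + boxes \<Gamma> + {#B#}) C \<Longrightarrow>
            G4iSLt (\<Phi> + boxes \<Gamma> + {#Imp (Box A) B#}) C"
| SLtR: "box_free \<Phi> \<Longrightarrow>
         G4iSLt (\<Phi> + \<Gamma> + {#Box A#}) A \<Longrightarrow>
         G4iSLt (\<Phi> + boxes \<Gamma>) (Box A)"
| AndImpL: "G4iSLt (add_mset (Imp A (Imp B C)) \<Gamma>) D \<Longrightarrow>
            G4iSLt (add_mset (Imp (And A B) C) \<Gamma>) D"
| OrImpL: "G4iSLt (add_mset (Imp A C) (add_mset (Imp B C) \<Gamma>)) D \<Longrightarrow>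
           G4iSLt (add_mset (Imp (Or A B) C) \<Gamma>) D"
| ImpImpL: "G4iSLt (add_mset (Imp B C) \<Gamma>) (Imp A B) \<Longrightarrow>
            G4iSLt (add_mset C \<Gamma>) D \<Longrightarrow>
            G4iSLt (add_mset (Imp (Imp A B) C) \<Gamma>) D"

inductive G4iSLt_cut :: "fm multiset \<Rightarrow> fm \<Rightarrow> bool" where
  BotL: "G4iSLt_cut (add_mset Bot \<Gamma>) C"
| IdP: "G4iSLt_cut (add_mset (Var p) \<Gamma>) (Var p)"
| AndL: "G4iSLt_cut (add_mset A (add_mset B \<Gamma>)) C \<Longrightarrow> G4iSLt_cut (add_mset (And A B) \<Gamma>) C"
| AndR: "G4iSLt_cut \<Gamma> A \<Longrightarrow> G4iSLt_cut \<Gamma> B \<Longrightarrow> G4iSLt_cut \<Gamma> (And A B)"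
| OrL: "G4iSLt_cut (add_mset A \<Gamma>) C \<Longrightarrow> G4iSLt_cut (add_mset B \<Gamma>) C \<Longrightarrow> G4iSLt_cut (add_mset (Or A B) \<Gamma>) C"
| OrR1: "G4iSLt_cut \<Gamma> A \<Longrightarrow> G4iSLt_cut \<Gamma> (Or A B)"
| OrR2: "G4iSLt_cut \<Gamma> B \<Longrightarrow> G4iSLt_cut \<Gamma> (Or A B)"
| VarImpL: "G4iSLt_cut (add_mset (Var p) (add_mset A \<Gamma>)) C \<Longrightarrow>
            G4iSLt_cut (add_mset (Var p) (add_mset (Imp (Var p) A) \<Gamma>)) C"
| ImpR: "G4iSLt_cut (add_mset A \<Gamma>) B \<Longrightarrow> G4iSLt_cut \<Gamma> (Imp A B)"
| BoxImpL: "box_free \<Phi> \<Longrightarrow>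
            G4iSLt_cut (\<Phi> + \<Gamma> + {#B, Box A#}) A \<Longrightarrow>
            G4iSLt_cut (\<Phi> + boxes \<Gamma> + {#B#}) C \<Longrightarrow>
            G4iSLt_cut (\<Phi> + boxes \<Gamma> + {#Imp (Box A) B#}) C"
| SLtR: "box_free \<Phi> \<Longrightarrow>
         G4iSLt_cut (\<Phi> + \<Gamma> + {#Box A#}) A \<Longrightarrow>
         G4iSLt_cut (\<Phi> + boxes \<Gamma>) (Box A)"
| AndImpL: "G4iSLt_cut (add_mset (Imp A (Imp B C)) \<Gamma>) D \<Longrightarrow>
            G4iSLt_cut (add_mset (Imp (And A B) C) \<Gamma>) D"
| OrImpL: "G4iSLt_cut (add_mset (Imp A C) (add_mset (Imp B C) \<Gamma>)) D \<Longrightarrow>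
           G4iSLt_cut (add_mset (Imp (Or A B) C) \<Gamma>) D"
| ImpImpL: "G4iSLt_cut (add_mset (Imp B C) \<Gamma>) (Imp A B) \<Longrightarrow>
            G4iSLt_cut (add_mset C \<Gamma>) D \<Longrightarrow>
            G4iSLt_cut (add_mset (Imp (Imp A B) C) \<Gamma>) D"
| Cut: "G4iSLt_cut \<Gamma> A \<Longrightarrow> G4iSLt_cut (add_mset A \<Gamma>) C \<Longrightarrow> G4iSLt_cut \<Gamma> C"

end

theory Submission
  imports Defs
begin

text \<open>Cut is admissible because G4iSLt is complete for Kripke models for which G4iSLt with cut
  is sound: finite intuitionistic models whose accessibility relation is irreflexive, transitive,
  contained in the intuitionistic order and closed under precomposition with it. Irreflexivity
  and finiteness make accessibility conversely well-founded, which validates the Loeb-style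
  rules SLtR and BoxImpL. Completeness is shown by backward proof search, terminating for a
  multiset measure of sequents. An unprovable sequent either has an unprovable premise of an
  invertible rule, whose countermodel refutes the sequent too, or it is blocked: the only
  rules that could still apply create new worlds, and their premises are unprovable. Then
  countermodels of these premises are glued below a new root, which refutes the sequent.\<close>

section \<open>Kripke models\<close>

text \<open>Worlds are lists so that gluing models below a new root \<open>[]\<close> can tag the worlds of
  the \<open>i\<close>-th model with \<open>i #\<close>.\<close>

record kmodel =
  worlds :: "nat list set"
  leq :: "nat list \<Rightarrow> nat list \<Rightarrow> bool"
  acc :: "nat list \<Rightarrow> nat list \<Rightarrow> bool"
  val :: "nat list \<Rightarrow> nat \<Rightarrow> bool"

fun sat :: "kmodel \<Rightarrow> nat list \<Rightarrow> fm \<Rightarrow> bool" where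
  "sat M w (Var p) = val M w p"
| "sat M w Bot = False"
| "sat M w (And A B) = (sat M w A \<and> sat M w B)"
| "sat M w (Or A B) = (sat M w A \<or> sat M w B)"
| "sat M w (Imp A B) = (\<forall>v\<in>worlds M. leq M w v \<longrightarrow> sat M v A \<longrightarrow> sat M v B)"
| "sat M w (Box A) = (\<forall>v\<in>worlds M. acc M w v \<longrightarrow> sat M v A)"

abbreviation sat_all :: "kmodel \<Rightarrow> nat list \<Rightarrow> fm multiset \<Rightarrow> bool" where
  "sat_all M w \<Gamma> \<equiv> \<forall>A\<in>#\<Gamma>. sat M w A"

locale slt_model =
  fixes M :: kmodel
  assumes finite_worlds: "finite (worlds M)"
    and leq_refl: "w \<in> worlds M \<Longrightarrow> leq M w w"
    and leq_trans: "leq M u v \<Longrightarrow> leq M v w \<Longrightarrow> leq M u w"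
    and leq_worlds: "leq M u v \<Longrightarrow> u \<in> worlds M \<and> v \<in> worlds M"
    and acc_leq: "acc M u v \<Longrightarrow> leq M u v"
    and acc_trans: "acc M u v \<Longrightarrow> acc M v w \<Longrightarrow> acc M u w"
    and acc_irrefl: "\<not> acc M u u"
    and leq_acc: "leq M u v \<Longrightarrow> acc M v w \<Longrightarrow> acc M u w"
    and val_mono: "leq M u v \<Longrightarrow> val M u p \<Longrightarrow> val M v p"
begin

lemma acc_worlds: "acc M u v \<Longrightarrow> u \<in> worlds M \<and> v \<in> worlds M"
  using acc_leq leq_worlds by blast

lemma sat_mono: "leq M u v \<Longrightarrow> sat M u A \<Longrightarrow> sat M v A"
proof (induction A arbitrary: u v)
  case (Imp A B)
  then show ?case by (auto intro: leq_trans)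
next
  case (Box A)
  then show ?case by (auto intro: leq_acc)
qed (auto intro: val_mono)

lemma sat_all_mono: "leq M u v \<Longrightarrow> sat_all M u \<Gamma> \<Longrightarrow> sat_all M v \<Gamma>"
  using sat_mono by blast

lemma sat_ImpI:
  "(\<And>v. v \<in> worlds M \<Longrightarrow> leq M w v \<Longrightarrow> sat M v A \<Longrightarrow> sat M v B) \<Longrightarrow> sat M w (Imp A B)"
  by simp

lemma sat_ImpD: "w \<in> worlds M \<Longrightarrow> sat M w (Imp A B) \<Longrightarrow> sat M w A \<Longrightarrow> sat M w B"
  using leq_refl by auto

lemma sat_Imp_if_sat: "sat M w B \<Longrightarrow> sat M w (Imp A B)"
  by (auto intro: sat_mono)

lemma sat_Imp_And_if_curried:
  assumes "sat M w (Imp A (Imp B C))"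
  shows "sat M w (Imp (And A B) C)"
proof (rule sat_ImpI)
  fix v assume v: "v \<in> worlds M" "leq M w v" "sat M v (And A B)"
  then have "sat M v (Imp B C)"
    using sat_ImpD[OF v(1) sat_mono[OF v(2) assms]] by simp
  then show "sat M v C"
    using sat_ImpD[OF v(1)] v(3) by simp
qed

lemma sat_Imp_Imp_if:
  assumes "sat M w A" "sat M w (Imp B D)"
  shows "sat M w (Imp (Imp A B) D)"
proof (rule sat_ImpI)
  fix v assume v: "v \<in> worlds M" "leq M w v" "sat M v (Imp A B)"
  have "sat M v B"
    using sat_ImpD[OF v(1) v(3) sat_mono[OF v(2) assms(1)]] .
  then show "sat M v D"
    using sat_ImpD[OF v(1) sat_mono[OF v(2) assms(2)]] by blast
qed

lemma sat_Imp_if_Imp_Imp: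
  assumes "sat M w (Imp (Imp A B) C)"
  shows "sat M w (Imp B C)"
proof (rule sat_ImpI)
  fix v assume v: "v \<in> worlds M" "leq M w v" "sat M v B"
  have "sat M v (Imp A B)"
    using v(3) by (rule sat_Imp_if_sat)
  then show "sat M v C"
    using sat_ImpD[OF v(1) sat_mono[OF v(2) assms]] by blast
qed

lemma sat_Imp_Or_if: "sat M w (Imp A C) \<Longrightarrow> sat M w (Imp B C) \<Longrightarrow> sat M w (Imp (Or A B) C)"
  by auto

lemma sat_Box_if_sat: "sat M w A \<Longrightarrow> sat M w (Box A)"
  by (auto intro: sat_mono acc_leq)

lemma wf_acc: "wf {(v, u). acc M u v}"
proof -
  let ?r = "{(v, u). acc M u v}"
  have "?r \<subseteq> worlds M \<times> worlds M"
    using acc_worlds by blast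
  then have "finite ?r"
    using finite_worlds by (meson finite_SigmaI finite_subset)
  moreover have "trans ?r"
    using acc_trans unfolding trans_def by blast
  then have "acyclic ?r"
    using acc_irrefl unfolding acyclic_def trancl_id[OF \<open>trans ?r\<close>] by blast
  ultimately show ?thesis
    using finite_acyclic_wf by blast
qed

section \<open>Soundness\<close>

lemma sat_Box_Loeb:
  assumes "w \<in> worlds M"
    and "\<And>u. u \<in> worlds M \<Longrightarrow> acc M w u \<Longrightarrow> sat M u (Box A) \<Longrightarrow> sat M u A"
  shows "sat M w (Box A)"
proof (rule ccontr)
  let ?Q = "{u \<in> worlds M. acc M w u \<and> \<not> sat M u A}"
  assume "\<not> sat M w (Box A)"
  then obtain x where "x \<in> ?Q"
    by auto
  with wf_acc obtain u where u: "u \<in> ?Q" and minimal: "\<And>v. acc M u v \<Longrightarrow> v \<notin> ?Q"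
    by (rule wfE_min) blast
  have "sat M u (Box A)"
    using minimal acc_trans u by auto
  with assms(2) u show False
    by blast
qed

lemma sat_Box_SLtR:
  assumes "w \<in> worlds M" "sat_all M w (\<Phi> + boxes \<Gamma>)"
    and "\<And>u. u \<in> worlds M \<Longrightarrow> sat_all M u (\<Phi> + \<Gamma> + {#Box A#}) \<Longrightarrow> sat M u A"
  shows "sat M w (Box A)"
proof (rule sat_Box_Loeb[OF assms(1)])
  fix u assume u: "u \<in> worlds M" "acc M w u" "sat M u (Box A)"
  have "sat_all M u \<Phi>"
    using assms(2) sat_all_mono[OF acc_leq[OF u(2)]] by auto
  moreover have "sat_all M u \<Gamma>"
  proof
    fix G assume "G \<in># \<Gamma>"
    then have "Box G \<in># \<Phi> + boxes \<Gamma>"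
      by simp
    then have "sat M w (Box G)"
      using assms(2) by blast
    then show "sat M u G"
      using u(1,2) by simp
  qed
  ultimately have "sat_all M u (\<Phi> + \<Gamma> + {#Box A#})"
    using u(3) by auto
  then show "sat M u A"
    by (rule assms(3)[OF u(1)])
qed

theorem G4iSLt_cut_sound:
  "G4iSLt_cut \<Gamma> C \<Longrightarrow> w \<in> worlds M \<Longrightarrow> sat_all M w \<Gamma> \<Longrightarrow> sat M w C"
proof (induction arbitrary: w rule: G4iSLt_cut.induct)
  case (VarImpL p A \<Gamma> C)
  then show ?case
    using sat_ImpD[of w "Var p" A] by auto
next
  case (ImpR A \<Gamma> B)
  then show ?case
    using sat_all_mono leq_worlds by fastforce
next
  case (BoxImpL \<Phi> \<Gamma> B A C)
  have "sat M w (Box A)"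
  proof (rule sat_Box_SLtR[where \<Phi>="add_mset (Imp (Box A) B) \<Phi>", OF BoxImpL.prems(1)])
    show "sat_all M w (add_mset (Imp (Box A) B) \<Phi> + boxes \<Gamma>)"
      using BoxImpL.prems(2) by auto
    fix u assume u: "u \<in> worlds M" "sat_all M u (add_mset (Imp (Box A) B) \<Phi> + \<Gamma> + {#Box A#})"
    then have "sat M u B"
      using sat_ImpD[OF u(1), of "Box A" B] by simp
    with u have "sat_all M u (\<Phi> + \<Gamma> + {#B, Box A#})"
      by simp
    then show "sat M u A"
      using BoxImpL.IH(1) u(1) by blast
  qed
  then have "sat M w B"
    using BoxImpL.prems sat_ImpD[OF BoxImpL.prems(1), of "Box A" B] by simp
  then show ?case
    using BoxImpL.IH(2) BoxImpL.prems by auto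
next
  case (SLtR \<Phi> \<Gamma> A)
  then show ?case
    by (intro sat_Box_SLtR) auto
next
  case (AndImpL A B C \<Gamma> D)
  then have "sat M w (Imp A (Imp B C))"
    by (force intro: leq_trans sat_mono)
  then show ?case
    using AndImpL by auto
next
  case (ImpImpL B C \<Gamma> A D)
  have imp: "sat M w (Imp (Imp A B) C)"
    using ImpImpL.prems(2) by simp
  then have "sat_all M w (add_mset (Imp B C) \<Gamma>)"
    using ImpImpL.prems(2) sat_Imp_if_Imp_Imp by simp
  then have "sat M w (Imp A B)"
    using ImpImpL.IH(1)[OF ImpImpL.prems(1)] by blast
  then have "sat_all M w (add_mset C \<Gamma>)"
    using ImpImpL.prems(2) sat_ImpD[OF ImpImpL.prems(1) imp] by simp
  then show ?case
    using ImpImpL.IH(2)[OF ImpImpL.prems(1)] by blast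
qed auto

end

section \<open>Countermodels\<close>

fun unbox :: "fm \<Rightarrow> fm" where
  "unbox (Box A) = A"
| "unbox A = A"

definition nonboxed :: "fm multiset \<Rightarrow> fm multiset" where
  "nonboxed \<Gamma> = filter_mset (\<lambda>A. \<not> is_boxed A) \<Gamma>"

definition unboxed :: "fm multiset \<Rightarrow> fm multiset" where
  "unboxed \<Gamma> = image_mset unbox (filter_mset is_boxed \<Gamma>)"

lemma nonboxed_boxes_unboxed: "nonboxed \<Gamma> + boxes (unboxed \<Gamma>) = \<Gamma>"
proof -
  have "image_mset (Box \<circ> unbox) (filter_mset is_boxed \<Gamma>) = filter_mset is_boxed \<Gamma>"
    by (induction \<Gamma>) (auto simp: is_boxed_def)
  then show ?thesis
    unfolding nonboxed_def unboxed_def by (simp add: image_mset.compositionality)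
qed

lemma box_free_nonboxed: "box_free (nonboxed \<Gamma>)"
  unfolding box_free_def nonboxed_def by auto

lemma in_unboxed_iff: "A \<in># unboxed \<Gamma> \<longleftrightarrow> Box A \<in># \<Gamma>"
  unfolding unboxed_def by (force simp: is_boxed_def)

lemma nonboxed_add_mset [simp]: "\<not> is_boxed A \<Longrightarrow> nonboxed (add_mset A \<Gamma>) = add_mset A (nonboxed \<Gamma>)"
  and unboxed_add_mset [simp]: "\<not> is_boxed A \<Longrightarrow> unboxed (add_mset A \<Gamma>) = unboxed \<Gamma>"
  unfolding nonboxed_def unboxed_def by simp_all

lemma (in slt_model) sat_all_if_nonboxed_unboxed:
  assumes "sat_all M w (nonboxed \<Gamma> + unboxed \<Gamma>)"
  shows "sat_all M w \<Gamma>"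
proof -
  have "sat_all M w (boxes (unboxed \<Gamma>))"
    using assms sat_Box_if_sat by auto
  with assms show ?thesis
    using nonboxed_boxes_unboxed[of \<Gamma>] by (metis union_iff)
qed

definition rooted :: "kmodel \<Rightarrow> nat list \<Rightarrow> bool" where
  "rooted M r \<longleftrightarrow> r \<in> worlds M \<and> (\<forall>v\<in>worlds M. leq M r v)"

definition refutable :: "fm multiset \<Rightarrow> fm \<Rightarrow> bool" where
  "refutable \<Gamma> C \<longleftrightarrow> (\<exists>M r. slt_model M \<and> rooted M r \<and> sat_all M r \<Gamma> \<and> \<not> sat M r C)"

lemma refutable_mono:
  assumes "refutable \<Delta> A"
    and "\<And>M w. slt_model M \<Longrightarrow> w \<in> worlds M \<Longrightarrow> sat_all M w \<Delta> \<Longrightarrow> sat_all M w \<Gamma>"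
    and "\<And>M w. slt_model M \<Longrightarrow> w \<in> worlds M \<Longrightarrow> sat_all M w \<Delta> \<Longrightarrow> sat M w C \<Longrightarrow> sat M w A"
  shows "refutable \<Gamma> C"
proof -
  obtain M r where M: "slt_model M" "rooted M r" "sat_all M r \<Delta>" "\<not> sat M r A"
    using assms(1) unfolding refutable_def by blast
  then have "r \<in> worlds M"
    unfolding rooted_def by blast
  with M show ?thesis
    unfolding refutable_def using assms(2,3) by blast
qed

lemma not_G4iSLt_cut_if_refutable: "refutable \<Gamma> C \<Longrightarrow> \<not> G4iSLt_cut \<Gamma> C"
  unfolding refutable_def rooted_def using slt_model.G4iSLt_cut_sound by blast

section \<open>Gluing countermodels below a new root\<close>

text \<open>The flag of a child marks that all its worlds will be accessible from the root glued below
  it, where \<open>\<Gamma>\<close> is to hold; hence they have to force the unboxed part of \<open>\<Gamma>\<close>.\<close>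

definition child :: "fm multiset \<Rightarrow> kmodel \<times> bool \<Rightarrow> bool" where
  "child \<Gamma> c \<longleftrightarrow> slt_model (fst c) \<and>
     (\<forall>x\<in>worlds (fst c). sat_all (fst c) x \<Gamma> \<and> (snd c \<longrightarrow> sat_all (fst c) x (unboxed \<Gamma>)))"

lemma child_if_refutable:
  assumes "refutable \<Delta> B"
    and "\<And>M w. slt_model M \<Longrightarrow> w \<in> worlds M \<Longrightarrow> sat_all M w \<Delta> \<Longrightarrow>
           sat_all M w \<Gamma> \<and> (b \<longrightarrow> sat_all M w (unboxed \<Gamma>))"
  shows "\<exists>M. child \<Gamma> (M, b) \<and> (\<exists>r\<in>worlds M. sat_all M r \<Delta> \<and> \<not> sat M r B)"
proof -
  obtain M r where M: "slt_model M" "rooted M r" "sat_all M r \<Delta>" "\<not> sat M r B"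
    using assms(1) unfolding refutable_def by blast
  have "sat_all M x \<Delta>" if "x \<in> worlds M" for x
    using M that slt_model.sat_all_mono unfolding rooted_def by blast
  then have "child \<Gamma> (M, b)"
    unfolding child_def using M(1) assms(2) by auto
  with M show ?thesis
    unfolding rooted_def by blast
qed

text \<open>Besides all worlds of the flagged children, the new root accesses every world that is
  accessible inside its child, as required by \<open>leq_acc\<close>.\<close>

definition glue_worlds :: "(kmodel \<times> bool) list \<Rightarrow> nat list set" where
  "glue_worlds cs = insert [] {i # x |i x. i < length cs \<and> x \<in> worlds (fst (cs ! i))}"

definition glue :: "nat set \<Rightarrow> (kmodel \<times> bool) list \<Rightarrow> kmodel" where
  "glue P cs =
   \<lparr>worlds = glue_worlds cs,
    leq = (\<lambda>u v. case u of
        [] \<Rightarrow> v \<in> glue_worlds cs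
      | i # x \<Rightarrow> (\<exists>y. v = i # y \<and> i < length cs \<and> leq (fst (cs ! i)) x y)),
    acc = (\<lambda>u v. case u of
        [] \<Rightarrow> (\<exists>i y. v = i # y \<and> i < length cs \<and> y \<in> worlds (fst (cs ! i)) \<and>
                 (snd (cs ! i) \<or> (\<exists>z. acc (fst (cs ! i)) z y)))
      | i # x \<Rightarrow> (\<exists>y. v = i # y \<and> i < length cs \<and> acc (fst (cs ! i)) x y)),
    val = (\<lambda>u p. case u of
        [] \<Rightarrow> p \<in> P
      | i # x \<Rightarrow> i < length cs \<and> val (fst (cs ! i)) x p)\<rparr>"

lemma glue_simps [simp]:
  "worlds (glue P cs) = glue_worlds cs"
  "leq (glue P cs) [] v \<longleftrightarrow> v \<in> glue_worlds cs"
  "leq (glue P cs) (i # x) v \<longleftrightarrow> (\<exists>y. v = i # y \<and> i < length cs \<and> leq (fst (cs ! i)) x y)"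
  "acc (glue P cs) [] v \<longleftrightarrow> (\<exists>j y. v = j # y \<and> j < length cs \<and> y \<in> worlds (fst (cs ! j)) \<and>
       (snd (cs ! j) \<or> (\<exists>z. acc (fst (cs ! j)) z y)))"
  "acc (glue P cs) (i # x) v \<longleftrightarrow> (\<exists>y. v = i # y \<and> i < length cs \<and> acc (fst (cs ! i)) x y)"
  "val (glue P cs) [] p \<longleftrightarrow> p \<in> P"
  "val (glue P cs) (i # x) p \<longleftrightarrow> i < length cs \<and> val (fst (cs ! i)) x p"
  unfolding glue_def by simp_all

lemma Cons_in_glue_worlds_iff [simp]:
  "i # x \<in> glue_worlds cs \<longleftrightarrow> i < length cs \<and> x \<in> worlds (fst (cs ! i))"
  unfolding glue_worlds_def by auto

lemma Nil_in_glue_worlds [simp]: "[] \<in> glue_worlds cs"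
  unfolding glue_worlds_def by simp

lemma slt_model_glue:
  assumes models: "\<And>c. c \<in> set cs \<Longrightarrow> slt_model (fst c)"
    and val_P: "\<And>c x p. c \<in> set cs \<Longrightarrow> x \<in> worlds (fst c) \<Longrightarrow> p \<in> P \<Longrightarrow> val (fst c) x p"
  shows "slt_model (glue P cs)"
proof -
  have m: "slt_model (fst (cs ! i))" if "i < length cs" for i
    using models that by simp
  note slt = slt_model.finite_worlds[OF m] slt_model.leq_refl[OF m] slt_model.leq_trans[OF m]
    slt_model.leq_worlds[OF m] slt_model.acc_leq[OF m] slt_model.acc_trans[OF m]
    slt_model.acc_irrefl[OF m] slt_model.leq_acc[OF m] slt_model.val_mono[OF m]
    slt_model.acc_worlds[OF m]
  let ?G = "glue P cs"
  show ?thesis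
  proof
    have "glue_worlds cs = insert [] (\<Union>i<length cs. (\<lambda>x. i # x) ` worlds (fst (cs ! i)))"
      unfolding glue_worlds_def by auto
    then show "finite (worlds ?G)"
      using slt(1) by simp
  next
    fix w assume "w \<in> worlds ?G"
    then show "leq ?G w w"
      using slt(2) by (cases w) auto
  next
    fix u v w assume "leq ?G u v" "leq ?G v w"
    then show "leq ?G u w"
      by (cases u; cases v) (auto dest: slt(3,4))
  next
    fix u v assume "leq ?G u v"
    then show "u \<in> worlds ?G \<and> v \<in> worlds ?G"
      by (cases u; cases v) (auto dest: slt(4))
  next
    fix u v assume "acc ?G u v"
    then show "leq ?G u v"
      by (cases u) (auto dest: slt(5))
  next
    fix u v w assume "acc ?G u v" "acc ?G v w"
    then show "acc ?G u w"
      by (cases u) (auto, (metis slt(6) slt(10))+)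
  next
    fix u show "\<not> acc ?G u u"
      by (cases u) (auto dest: slt(7))
  next
    fix u v w assume "leq ?G u v" "acc ?G v w"
    then show "acc ?G u w"
      by (cases u; cases v) (auto dest: slt(8,10))
  next
    fix u v p assume "leq ?G u v" "val ?G u p"
    then show "val ?G v p"
      using val_P by (cases u; cases v) (auto dest: slt(9))
  qed
qed

lemma sat_glue:
  assumes "i < length cs" "slt_model (fst (cs ! i))" "x \<in> worlds (fst (cs ! i))"
  shows "sat (glue P cs) (i # x) A \<longleftrightarrow> sat (fst (cs ! i)) x A"
  using assms(3)
proof (induction A arbitrary: x)
  case (Imp A B)
  then show ?case
    using assms(1) slt_model.leq_worlds[OF assms(2)] by (auto 0 4)
next
  case (Box A)
  then show ?case
    using assms(1) slt_model.acc_worlds[OF assms(2)] by (auto 0 4)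
qed (use assms(1) in auto)

lemma rooted_glue: "rooted (glue P cs) []"
  unfolding rooted_def by simp

lemma glue_copy_of_child:
  assumes "c \<in> set cs" "slt_model (fst c)" "x \<in> worlds (fst c)"
  obtains v where "leq (glue P cs) [] v" "snd c \<Longrightarrow> acc (glue P cs) [] v"
    "\<And>A. sat (glue P cs) v A \<longleftrightarrow> sat (fst c) x A"
proof -
  obtain i where i: "i < length cs" "cs ! i = c"
    using assms(1) by (meson in_set_conv_nth)
  show thesis
    by (rule that[of "i # x"]) (use i assms sat_glue[of i cs x P] in auto)
qed

lemma sat_all_glue_nonroot:
  assumes "\<And>c. c \<in> set cs \<Longrightarrow> child \<Gamma> c" "v \<in> worlds (glue P cs)" "v \<noteq> []"
  shows "sat_all (glue P cs) v \<Gamma>"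
proof -
  obtain i x where v: "v = i # x" "i < length cs" "x \<in> worlds (fst (cs ! i))"
    using assms(2,3) by (cases v) auto
  have "child \<Gamma> (cs ! i)"
    using assms(1) v(2) by simp
  then show ?thesis
    using sat_glue[OF v(2) _ v(3)] v(1,3) unfolding child_def by auto
qed

lemma sat_all_unboxed_glue_acc_root:
  assumes "\<And>c. c \<in> set cs \<Longrightarrow> child \<Gamma> c" "acc (glue P cs) [] v"
  shows "sat_all (glue P cs) v (unboxed \<Gamma>)"
proof -
  obtain i y where v: "v = i # y" "i < length cs" "y \<in> worlds (fst (cs ! i))"
    and flag: "snd (cs ! i) \<or> (\<exists>z. acc (fst (cs ! i)) z y)"
    using assms(2) by auto
  have c: "child \<Gamma> (cs ! i)"
    using assms(1) v(2) by simp
  then have m: "slt_model (fst (cs ! i))"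
    unfolding child_def by blast
  have "sat_all (fst (cs ! i)) y (unboxed \<Gamma>)"
    using flag
  proof
    assume "snd (cs ! i)"
    then show ?thesis
      using c v(3) unfolding child_def by blast
  next
    assume "\<exists>z. acc (fst (cs ! i)) z y"
    then obtain z where z: "acc (fst (cs ! i)) z y" ..
    then have "sat_all (fst (cs ! i)) z \<Gamma>"
      using c slt_model.acc_worlds[OF m] unfolding child_def by blast
    then show ?thesis
      using z v(3) by (fastforce simp: in_unboxed_iff)
  qed
  then show ?thesis
    using sat_glue[OF v(2) m v(3)] v(1) by simp
qed

lemma finite_choice_list:
  assumes "finite D" "\<forall>d\<in>D. \<exists>c. P c \<and> Q d c"
  obtains cs where "\<forall>c\<in>set cs. P c" "\<forall>d\<in>D. \<exists>c\<in>set cs. Q d c"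
proof -
  from bchoice[OF assms(2)] obtain f where f: "\<forall>d\<in>D. P (f d) \<and> Q d (f d)" ..
  obtain cs where cs: "set cs = f ` D"
    using finite_list[OF finite_imageI[OF assms(1)]] ..
  show thesis
  proof (rule that)
    show "\<forall>c\<in>set cs. P c"
      using f unfolding cs by blast
    show "\<forall>d\<in>D. \<exists>c\<in>set cs. Q d c"
      using f unfolding cs by blast
  qed
qed

text \<open>A demand \<open>(b, \<Phi>, B)\<close> asks for a world above the root, accessible from it if \<open>b\<close>,
  that refutes the sequent \<open>\<Phi> \<Rightarrow> B\<close>.\<close>

type_synonym demand = "bool \<times> fm multiset \<times> fm"

lemma glued_countermodel:
  assumes "finite D"
    and "\<And>b \<Phi> B. (b, \<Phi>, B) \<in> D \<Longrightarrow>
           \<exists>M. child \<Gamma> (M, b) \<and> (\<exists>r\<in>worlds M. sat_all M r \<Phi> \<and> \<not> sat M r B)"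
  obtains G where "slt_model G" "rooted G []" "\<And>p. val G [] p \<longleftrightarrow> Var p \<in># \<Gamma>"
    "\<And>v. v \<in> worlds G \<Longrightarrow> v \<noteq> [] \<Longrightarrow> sat_all G v \<Gamma>"
    "\<And>v. acc G [] v \<Longrightarrow> sat_all G v (unboxed \<Gamma>)"
    "\<And>b \<Phi> B. (b, \<Phi>, B) \<in> D \<Longrightarrow>
       \<exists>v. leq G [] v \<and> (b \<longrightarrow> acc G [] v) \<and> sat_all G v \<Phi> \<and> \<not> sat G v B"
proof -
  define refutes :: "kmodel \<times> bool \<Rightarrow> demand \<Rightarrow> bool" where
    "refutes c d \<longleftrightarrow> (case d of (b, \<Phi>, B) \<Rightarrow>
       snd c = b \<and> (\<exists>r\<in>worlds (fst c). sat_all (fst c) r \<Phi> \<and> \<not> sat (fst c) r B))" for c d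
  have choice: "\<forall>d\<in>D. \<exists>c. child \<Gamma> c \<and> refutes c d"
    using assms(2) unfolding refutes_def by fastforce
  obtain cs where cs: "\<forall>c\<in>set cs. child \<Gamma> c" and met: "\<forall>d\<in>D. \<exists>c\<in>set cs. refutes c d"
    by (rule finite_choice_list[OF assms(1) choice])
  let ?G = "glue {p. Var p \<in># \<Gamma>} cs"
  have models: "slt_model (fst c)" if "c \<in> set cs" for c
    using cs that unfolding child_def by blast
  show thesis
  proof (rule that)
    show "slt_model ?G"
    proof (rule slt_model_glue)
      fix c x p assume "c \<in> set cs" "x \<in> worlds (fst c)" "p \<in> {p. Var p \<in># \<Gamma>}"
      then show "val (fst c) x p"
        using cs unfolding child_def by fastforce
    qed (use models in blast)
  next
    fix b \<Phi> B assume "(b, \<Phi>, B) \<in> D"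
    then obtain c r where c: "c \<in> set cs" "snd c = b" "r \<in> worlds (fst c)"
      "sat_all (fst c) r \<Phi>" "\<not> sat (fst c) r B"
      using met unfolding refutes_def by fastforce
    obtain v where "leq ?G [] v" "b \<Longrightarrow> acc ?G [] v" "\<And>A. sat ?G v A \<longleftrightarrow> sat (fst c) r A"
      using glue_copy_of_child[OF c(1) models[OF c(1)] c(3)] c(2) by metis
    with c(4,5) show "\<exists>v. leq ?G [] v \<and> (b \<longrightarrow> acc ?G [] v) \<and> sat_all ?G v \<Phi> \<and> \<not> sat ?G v B"
      by blast
  next
    show "rooted ?G []"
      by (rule rooted_glue)
  next
    show "val ?G [] p \<longleftrightarrow> Var p \<in># \<Gamma>" for p
      by simp
  next
    show "sat_all ?G v \<Gamma>" if "v \<in> worlds ?G" "v \<noteq> []" for v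
      using sat_all_glue_nonroot[OF _ that] cs by blast
  next
    show "sat_all ?G v (unboxed \<Gamma>)" if "acc ?G [] v" for v
      using sat_all_unboxed_glue_acc_root[OF _ that] cs by blast
  qed
qed

section \<open>Blocked sequents are refutable\<close>

text \<open>For implications handled by ImpImpL or BoxImpL, blocking refers to the premise that
  the countermodel must refute at a new world; the other premise, once unprovable, is dealt with
  by inversion.\<close>

fun blocked_left :: "fm multiset \<Rightarrow> fm \<Rightarrow> bool" where
  "blocked_left \<Gamma> (Var p) = True"
| "blocked_left \<Gamma> (Box A) = True"
| "blocked_left \<Gamma> (Imp (Var p) B) = (Var p \<notin># \<Gamma>)"
| "blocked_left \<Gamma> (Imp Bot B) = True"
| "blocked_left \<Gamma> (Imp (Imp A B) D) =
     refutable (add_mset A (add_mset (Imp B D) (\<Gamma> - {#Imp (Imp A B) D#}))) B"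
| "blocked_left \<Gamma> (Imp (Box A) B) =
     (let \<Gamma>' = \<Gamma> - {#Imp (Box A) B#} in refutable (nonboxed \<Gamma>' + unboxed \<Gamma>' + {#B, Box A#}) A)"
| "blocked_left \<Gamma> _ = False"

fun blocked_right :: "fm multiset \<Rightarrow> fm \<Rightarrow> bool" where
  "blocked_right \<Gamma> (Var p) = (Var p \<notin># \<Gamma>)"
| "blocked_right \<Gamma> Bot = True"
| "blocked_right \<Gamma> (Or A B) = (refutable \<Gamma> A \<and> refutable \<Gamma> B)"
| "blocked_right \<Gamma> (Box A) = refutable (nonboxed \<Gamma> + unboxed \<Gamma> + {#Box A#}) A"
| "blocked_right \<Gamma> _ = False"

fun left_demands :: "fm \<Rightarrow> demand set" where
  "left_demands (Imp (Imp A B) D) = {(False, {#A#}, B)}"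
| "left_demands (Imp (Box A) B) = {(True, {#}, A)}"
| "left_demands _ = {}"

fun right_demands :: "fm \<Rightarrow> demand set" where
  "right_demands (Or A B) = {(False, {#}, A), (False, {#}, B)}"
| "right_demands (Box A) = {(True, {#}, A)}"
| "right_demands _ = {}"

lemma finite_left_demands: "finite (left_demands X)"
  by (induction X rule: left_demands.induct) auto

lemma finite_right_demands: "finite (right_demands C)"
  by (cases C) auto

lemma boxed_child_if_refutable:
  assumes "refutable (nonboxed \<Gamma> + unboxed \<Gamma> + \<Theta>) A"
  shows "\<exists>M. child \<Gamma> (M, True) \<and> (\<exists>r\<in>worlds M. \<not> sat M r A)"
proof -
  have "\<exists>M. child \<Gamma> (M, True) \<and>
      (\<exists>r\<in>worlds M. sat_all M r (nonboxed \<Gamma> + unboxed \<Gamma> + \<Theta>) \<and> \<not> sat M r A)"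
  proof (rule child_if_refutable[OF assms])
    fix M w assume M: "slt_model M" and "sat_all M w (nonboxed \<Gamma> + unboxed \<Gamma> + \<Theta>)"
    then have "sat_all M w (nonboxed \<Gamma> + unboxed \<Gamma>)"
      by simp
    then show "sat_all M w \<Gamma> \<and> (True \<longrightarrow> sat_all M w (unboxed \<Gamma>))"
      using slt_model.sat_all_if_nonboxed_unboxed[OF M] by simp
  qed
  then show ?thesis
    by blast
qed

lemma left_demand_met:
  assumes "X \<in># \<Gamma>" "blocked_left \<Gamma> X" "(b, \<Phi>, B) \<in> left_demands X"
  shows "\<exists>M. child \<Gamma> (M, b) \<and> (\<exists>r\<in>worlds M. sat_all M r \<Phi> \<and> \<not> sat M r B)"
proof -
  obtain \<Gamma>' where \<Gamma>: "\<Gamma> = add_mset X \<Gamma>'"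
    using multi_member_split[OF assms(1)] by blast
  show ?thesis
  proof (cases X rule: left_demands.cases)
    case (1 A B' D)
    let ?\<Delta> = "add_mset A (add_mset (Imp B' D) \<Gamma>')"
    have "refutable ?\<Delta> B'"
      using assms(2) \<Gamma> 1 by simp
    then have "\<exists>M. child \<Gamma> (M, False) \<and> (\<exists>r\<in>worlds M. sat_all M r ?\<Delta> \<and> \<not> sat M r B')"
    proof (rule child_if_refutable)
      fix M w assume M: "slt_model M" and "sat_all M w ?\<Delta>"
      then show "sat_all M w \<Gamma> \<and> (False \<longrightarrow> sat_all M w (unboxed \<Gamma>))"
        using slt_model.sat_Imp_Imp_if[OF M, of w A B' D] \<Gamma> 1 by simp
    qed
    then show ?thesis
      using assms(3) 1 by auto
  next
    case (2 A B')
    have "refutable (nonboxed \<Gamma>' + unboxed \<Gamma>' + {#B', Box A#}) A"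
      using assms(2) \<Gamma> 2 by simp
    then have "refutable (nonboxed \<Gamma> + unboxed \<Gamma> + {#Box A#}) A"
    proof (rule refutable_mono)
      fix M w assume M: "slt_model M" and "sat_all M w (nonboxed \<Gamma>' + unboxed \<Gamma>' + {#B', Box A#})"
      then show "sat_all M w (nonboxed \<Gamma> + unboxed \<Gamma> + {#Box A#})"
        using slt_model.sat_Imp_if_sat[OF M, of w B' "Box A"] \<Gamma> 2 by (simp add: is_boxed_def)
    qed
    from boxed_child_if_refutable[OF this] show ?thesis
      using assms(3) 2 by auto
  qed (use assms(3) in auto)
qed

lemma right_demand_met:
  assumes "blocked_right \<Gamma> C" "(b, \<Phi>, B) \<in> right_demands C"
  shows "\<exists>M. child \<Gamma> (M, b) \<and> (\<exists>r\<in>worlds M. sat_all M r \<Phi> \<and> \<not> sat M r B)"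
proof (cases C)
  case (Or A1 A2)
  then have "refutable \<Gamma> B" "b = False" "\<Phi> = {#}"
    using assms by auto
  moreover have "\<exists>M. child \<Gamma> (M, False) \<and> (\<exists>r\<in>worlds M. sat_all M r \<Gamma> \<and> \<not> sat M r B)"
    using \<open>refutable \<Gamma> B\<close> by (rule child_if_refutable) simp
  ultimately show ?thesis
    by auto
next
  case (Box A)
  then have "refutable (nonboxed \<Gamma> + unboxed \<Gamma> + {#Box A#}) A"
    using assms(1) by simp
  from boxed_child_if_refutable[OF this] show ?thesis
    using assms(2) Box by auto
qed (use assms(2) in auto)

definition demands :: "fm multiset \<Rightarrow> fm \<Rightarrow> demand set" where
  "demands \<Gamma> C = (\<Union>X\<in>set_mset \<Gamma>. left_demands X) \<union> right_demands C"

lemma finite_demands: "finite (demands \<Gamma> C)"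
  unfolding demands_def using finite_left_demands finite_right_demands by auto

lemma demand_met_if_blocked:
  assumes "\<forall>X\<in>#\<Gamma>. blocked_left \<Gamma> X" "blocked_right \<Gamma> C" "(b, \<Phi>, B) \<in> demands \<Gamma> C"
  shows "\<exists>M. child \<Gamma> (M, b) \<and> (\<exists>r\<in>worlds M. sat_all M r \<Phi> \<and> \<not> sat M r B)"
  using assms left_demand_met right_demand_met unfolding demands_def by blast

context slt_model
begin

lemma sat_all_at_root:
  assumes "rooted M r"
    and atoms: "\<And>p. Var p \<in># \<Gamma> \<Longrightarrow> val M r p"
    and above: "\<And>v. v \<in> worlds M \<Longrightarrow> v \<noteq> r \<Longrightarrow> sat_all M v \<Gamma>"
    and accessible: "\<And>v. acc M r v \<Longrightarrow> sat_all M v (unboxed \<Gamma>)"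
    and implications: "\<And>A B. Imp A B \<in># \<Gamma> \<Longrightarrow> \<not> sat M r A"
    and shape: "\<And>X. X \<in># \<Gamma> \<Longrightarrow> (\<exists>p. X = Var p) \<or> is_boxed X \<or> (\<exists>A B. X = Imp A B)"
  shows "sat_all M r \<Gamma>"
proof
  fix X assume X: "X \<in># \<Gamma>"
  show "sat M r X"
    using shape[OF X]
  proof (elim disjE exE)
    fix p assume "X = Var p"
    then show "sat M r X"
      using atoms X by simp
  next
    assume "is_boxed X"
    then obtain A where "X = Box A"
      unfolding is_boxed_def by blast
    then show "sat M r X"
      using accessible X by (auto simp: in_unboxed_iff)
  next
    fix A B assume XAB: "X = Imp A B"
    show "sat M r X"
      unfolding XAB
    proof (rule sat_ImpI)
      fix v assume v: "v \<in> worlds M" "leq M r v" "sat M v A"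
      then have "v \<noteq> r"
        using implications X XAB by auto
      then have "sat M v (Imp A B)"
        using above[OF v(1)] X XAB by blast
      then show "sat M v B"
        using sat_ImpD v(1,3) by blast
    qed
  qed
qed

lemma sat_all_root_if_blocked:
  assumes "rooted M r" and left: "\<forall>X\<in>#\<Gamma>. blocked_left \<Gamma> X"
    and val: "\<And>p. val M r p \<longleftrightarrow> Var p \<in># \<Gamma>"
    and above: "\<And>v. v \<in> worlds M \<Longrightarrow> v \<noteq> r \<Longrightarrow> sat_all M v \<Gamma>"
    and accessible: "\<And>v. acc M r v \<Longrightarrow> sat_all M v (unboxed \<Gamma>)"
    and realised: "\<And>b \<Phi> B. (b, \<Phi>, B) \<in> demands \<Gamma> C \<Longrightarrow>
      \<exists>v. leq M r v \<and> (b \<longrightarrow> acc M r v) \<and> sat_all M v \<Phi> \<and> \<not> sat M v B"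
  shows "sat_all M r \<Gamma>"
proof (rule sat_all_at_root[OF assms(1) _ above accessible])
  fix A B assume AB: "Imp A B \<in># \<Gamma>"
  show "\<not> sat M r A"
  proof (cases A)
    case (Var p)
    then show ?thesis
      using left AB val by auto
  next
    case (Imp A1 A2)
    then have "(False, {#A1#}, A2) \<in> demands \<Gamma> C"
      using AB unfolding demands_def by force
    then obtain v where v: "leq M r v" "sat M v A1" "\<not> sat M v A2"
      using realised by force
    then have "\<not> sat M v (Imp A1 A2)"
      using sat_ImpD leq_worlds by blast
    then show ?thesis
      using sat_mono[OF v(1)] Imp by blast
  next
    case (Box A')
    then have "(True, {#}, A') \<in> demands \<Gamma> C"
      using AB unfolding demands_def by force
    then obtain v where "acc M r v" "\<not> sat M v A'"
      using realised by force
    then show ?thesis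
      using Box acc_worlds by auto
  qed (use left AB in auto)
next
  fix X assume "X \<in># \<Gamma>"
  then show "(\<exists>p. X = Var p) \<or> is_boxed X \<or> (\<exists>A B. X = Imp A B)"
    using left by (cases X) (auto simp: is_boxed_def)
qed (use val in auto)

lemma not_sat_root_if_blocked:
  assumes right: "blocked_right \<Gamma> C"
    and val: "\<And>p. val M r p \<longleftrightarrow> Var p \<in># \<Gamma>"
    and realised: "\<And>b \<Phi> B. (b, \<Phi>, B) \<in> demands \<Gamma> C \<Longrightarrow>
      \<exists>v. leq M r v \<and> (b \<longrightarrow> acc M r v) \<and> sat_all M v \<Phi> \<and> \<not> sat M v B"
  shows "\<not> sat M r C"
proof (cases C)
  case (Or A B)
  then have "(False, {#}, A) \<in> demands \<Gamma> C" "(False, {#}, B) \<in> demands \<Gamma> C"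
    unfolding demands_def by auto
  then obtain v1 v2 where "leq M r v1" "\<not> sat M v1 A" "leq M r v2" "\<not> sat M v2 B"
    using realised by (metis (no_types, lifting))
  then show ?thesis
    using Or sat_mono by auto
next
  case (Box A)
  then have "(True, {#}, A) \<in> demands \<Gamma> C"
    unfolding demands_def by auto
  then obtain v where "acc M r v" "\<not> sat M v A"
    using realised by force
  then show ?thesis
    using Box acc_worlds by auto
qed (use right val in auto)

end

lemma refutable_if_blocked:
  assumes left: "\<forall>X\<in>#\<Gamma>. blocked_left \<Gamma> X" and right: "blocked_right \<Gamma> C"
  shows "refutable \<Gamma> C"
proof (rule glued_countermodel[OF finite_demands demand_met_if_blocked[OF left right]])
  fix G assume G: "slt_model G" "rooted G []" "\<And>p. val G [] p \<longleftrightarrow> Var p \<in># \<Gamma>"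
      "\<And>v. v \<in> worlds G \<Longrightarrow> v \<noteq> [] \<Longrightarrow> sat_all G v \<Gamma>"
      "\<And>v. acc G [] v \<Longrightarrow> sat_all G v (unboxed \<Gamma>)"
    and realised: "\<And>b \<Phi> B. (b, \<Phi>, B) \<in> demands \<Gamma> C \<Longrightarrow>
       \<exists>v. leq G [] v \<and> (b \<longrightarrow> acc G [] v) \<and> sat_all G v \<Phi> \<and> \<not> sat G v B"
  have "sat_all G [] \<Gamma>"
    using slt_model.sat_all_root_if_blocked[OF G(1,2) left G(3,4,5) realised] by blast
  moreover have "\<not> sat G [] C"
    using slt_model.not_sat_root_if_blocked[OF G(1) right G(3) realised] by blast
  ultimately show ?thesis
    unfolding refutable_def using G(1,2) by blast
qed

section \<open>Completeness of backward proof search\<close>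

text \<open>\<open>And\<close> weighs \<open>2\<close> more than its arguments so that AndImpL decreases the weight.\<close>

fun weight :: "fm \<Rightarrow> nat" where
  "weight (Var p) = 1"
| "weight Bot = 1"
| "weight (And A B) = weight A + weight B + 2"
| "weight (Or A B) = weight A + weight B + 1"
| "weight (Imp A B) = weight A + weight B + 1"
| "weight (Box A) = weight A + 1"

abbreviation weights :: "fm multiset \<Rightarrow> nat multiset" where
  "weights \<Gamma> \<equiv> image_mset (\<lambda>A. 2 * weight A) \<Gamma>"

text \<open>Doubling the weights and adding one for the succedent makes \<open>\<Gamma> \<Rightarrow> Box A\<close> heavier
  than the premise \<open>\<Gamma>', Box A \<Rightarrow> A\<close> of the rule SLtR.\<close>

definition sequent_measure :: "fm multiset \<Rightarrow> fm \<Rightarrow> nat multiset" where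
  "sequent_measure \<Gamma> C = weights \<Gamma> + {#2 * weight C + 1#}"

lemma sequent_measure_less:
  assumes "\<forall>k\<in>#weights \<Delta> + {#2 * weight A + 1#}. \<exists>j\<in>#weights \<Theta> + {#2 * weight C + 1#}. k < j"
  shows "(sequent_measure (\<Delta> + \<Sigma>) A, sequent_measure (\<Theta> + \<Sigma>) C) \<in> mult less_than"
  using one_step_implies_mult[of "weights \<Theta> + {#2 * weight C + 1#}" "weights \<Delta> + {#2 * weight A + 1#}"
      less_than "weights \<Sigma>"] assms
  unfolding sequent_measure_def by (simp add: ac_simps)

lemma sequent_measure_less_antecedent:
  assumes "\<forall>D\<in>#\<Delta>. weight D < weight X"
  shows "(sequent_measure (\<Delta> + \<Gamma>) C, sequent_measure (add_mset X \<Gamma>) C) \<in> mult less_than"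
  using one_step_implies_mult[of "{#2 * weight X#}" "weights \<Delta>" less_than "sequent_measure \<Gamma> C"] assms
  unfolding sequent_measure_def by (auto simp: ac_simps add_mset_commute)

lemma sequent_measure_less_unboxed:
  assumes "\<forall>k\<in>#weights \<Delta> + {#2 * weight A + 1#}. \<exists>j\<in>#weights \<Theta> + {#2 * weight C + 1#}. k < j"
  shows "(sequent_measure (nonboxed \<Gamma> + unboxed \<Gamma> + \<Delta>) A,
          sequent_measure (\<Gamma> + \<Theta>) C) \<in> mult less_than"
proof -
  have "(sequent_measure ((unboxed \<Gamma> + \<Delta>) + nonboxed \<Gamma>) A,
         sequent_measure ((boxes (unboxed \<Gamma>) + \<Theta>) + nonboxed \<Gamma>) C) \<in> mult less_than"
  proof (rule sequent_measure_less, intro ballI)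
    fix k assume "k \<in># weights (unboxed \<Gamma> + \<Delta>) + {#2 * weight A + 1#}"
    then consider G where "G \<in># unboxed \<Gamma>" "k = 2 * weight G"
      | "k \<in># weights \<Delta> + {#2 * weight A + 1#}"
      by auto
    then show "\<exists>j\<in>#weights (boxes (unboxed \<Gamma>) + \<Theta>) + {#2 * weight C + 1#}. k < j"
    proof cases
      case (1 G)
      show ?thesis
      proof
        show "2 * weight (Box G) \<in># weights (boxes (unboxed \<Gamma>) + \<Theta>) + {#2 * weight C + 1#}"
          using 1 by (auto simp: image_iff simp del: weight.simps)
        show "k < 2 * weight (Box G)"
          using 1 by simp
      qed
    next
      case 2
      then show ?thesis
        using assms by fastforce
    qed
  qed
  then show ?thesis
    using nonboxed_boxes_unboxed[of \<Gamma>] by (simp add: ac_simps)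
qed

definition complete_below :: "fm multiset \<Rightarrow> fm \<Rightarrow> bool" where
  "complete_below \<Gamma> C \<longleftrightarrow> (\<forall>\<Gamma>' C'. (sequent_measure \<Gamma>' C', sequent_measure \<Gamma> C) \<in> mult less_than \<longrightarrow>
      \<not> G4iSLt \<Gamma>' C' \<longrightarrow> refutable \<Gamma>' C')"

lemma complete_belowD:
  "complete_below \<Gamma> C \<Longrightarrow> (sequent_measure \<Gamma>' C', sequent_measure \<Gamma> C) \<in> mult less_than \<Longrightarrow>
    \<not> G4iSLt \<Gamma>' C' \<Longrightarrow> refutable \<Gamma>' C'"
  unfolding complete_below_def by blast

lemma refutable_if_replaced:
  assumes IH: "complete_below \<Gamma> C"
    and \<Gamma>: "\<Gamma> = add_mset X \<Gamma>'"
    and unprovable: "\<not> G4iSLt (\<Delta> + \<Gamma>') C"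
    and lighter: "\<forall>D\<in>#\<Delta>. weight D < weight X"
    and entails: "\<And>M w. slt_model M \<Longrightarrow> w \<in> worlds M \<Longrightarrow> sat_all M w \<Delta> \<Longrightarrow> sat M w X"
  shows "refutable \<Gamma> C"
proof -
  have "(sequent_measure (\<Delta> + \<Gamma>') C, sequent_measure \<Gamma> C) \<in> mult less_than"
    unfolding \<Gamma> using lighter by (rule sequent_measure_less_antecedent)
  then have "refutable (\<Delta> + \<Gamma>') C"
    using complete_belowD[OF IH] unprovable \<Gamma> by simp
  then show ?thesis
    by (rule refutable_mono) (use \<Gamma> entails in auto)
qed

lemma blocked_Imp_Imp_left_or_refutable:
  assumes IH: "complete_below \<Gamma> C"
    and unprovable: "\<not> G4iSLt \<Gamma> C"
    and \<Gamma>: "\<Gamma> = add_mset (Imp (Imp A B) D) \<Gamma>'"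
  shows "blocked_left \<Gamma> (Imp (Imp A B) D) \<or> refutable \<Gamma> C"
proof (cases "G4iSLt (add_mset D \<Gamma>') C")
  case True
  let ?\<Delta> = "add_mset A (add_mset (Imp B D) \<Gamma>')"
  have "\<not> G4iSLt ?\<Delta> B"
  proof
    assume "G4iSLt ?\<Delta> B"
    then have "G4iSLt (add_mset (Imp B D) \<Gamma>') (Imp A B)"
      by (rule G4iSLt.ImpR)
    then have "G4iSLt \<Gamma> C"
      unfolding \<Gamma> using True by (rule G4iSLt.ImpImpL)
    with unprovable show False ..
  qed
  moreover have "(sequent_measure ({#A, Imp B D#} + \<Gamma>') B,
                  sequent_measure ({#Imp (Imp A B) D#} + \<Gamma>') C) \<in> mult less_than"
    by (rule sequent_measure_less) auto
  ultimately have "refutable ?\<Delta> B"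
    using complete_belowD[OF IH] \<Gamma> by (simp add: add_mset_commute)
  then show ?thesis
    using \<Gamma> by simp
next
  case False
  have "refutable \<Gamma> C"
  proof (rule refutable_if_replaced[OF IH \<Gamma>, where \<Delta>="{#D#}"])
    show "\<not> G4iSLt ({#D#} + \<Gamma>') C"
      using False by simp
    fix M w assume M: "slt_model M" and "sat_all M w {#D#}"
    then have "sat M w D"
      by simp
    then show "sat M w (Imp (Imp A B) D)"
      by (rule slt_model.sat_Imp_if_sat[OF M])
  qed auto
  then show ?thesis ..
qed

lemma blocked_Box_Imp_left_or_refutable:
  assumes IH: "complete_below \<Gamma> C"
    and unprovable: "\<not> G4iSLt \<Gamma> C"
    and \<Gamma>: "\<Gamma> = add_mset (Imp (Box A) B) \<Gamma>'"
  shows "blocked_left \<Gamma> (Imp (Box A) B) \<or> refutable \<Gamma> C"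
proof (cases "G4iSLt (add_mset B \<Gamma>') C")
  case True
  let ?\<Delta> = "nonboxed \<Gamma>' + unboxed \<Gamma>' + {#B, Box A#}"
  have "G4iSLt (nonboxed \<Gamma>' + boxes (unboxed \<Gamma>') + {#B#}) C"
    using True nonboxed_boxes_unboxed[of \<Gamma>'] by simp
  have "\<not> G4iSLt ?\<Delta> A"
  proof
    assume "G4iSLt ?\<Delta> A"
    then have "G4iSLt (nonboxed \<Gamma>' + boxes (unboxed \<Gamma>') + {#Imp (Box A) B#}) C"
      using \<open>G4iSLt (nonboxed \<Gamma>' + boxes (unboxed \<Gamma>') + {#B#}) C\<close>
      by (rule G4iSLt.BoxImpL[OF box_free_nonboxed])
    with unprovable show False
      using \<Gamma> nonboxed_boxes_unboxed[of \<Gamma>'] by simp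
  qed
  moreover have "(sequent_measure ?\<Delta> A, sequent_measure (\<Gamma>' + {#Imp (Box A) B#}) C) \<in> mult less_than"
    by (rule sequent_measure_less_unboxed) auto
  ultimately have "refutable ?\<Delta> A"
    using complete_belowD[OF IH] \<Gamma> by simp
  then show ?thesis
    using \<Gamma> by simp
next
  case False
  have "refutable \<Gamma> C"
  proof (rule refutable_if_replaced[OF IH \<Gamma>, where \<Delta>="{#B#}"])
    show "\<not> G4iSLt ({#B#} + \<Gamma>') C"
      using False by simp
    fix M w assume M: "slt_model M" and "sat_all M w {#B#}"
    then have "sat M w B"
      by simp
    then show "sat M w (Imp (Box A) B)"
      by (rule slt_model.sat_Imp_if_sat[OF M])
  qed auto
  then show ?thesis ..
qed

lemma refutable_And_left:
  assumes IH: "complete_below \<Gamma> C" and unprovable: "\<not> G4iSLt \<Gamma> C"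
    and \<Gamma>: "\<Gamma> = add_mset (And A B) \<Gamma>'"
  shows "refutable \<Gamma> C"
proof (rule refutable_if_replaced[OF IH \<Gamma>, where \<Delta>="{#A, B#}"])
  show "\<not> G4iSLt ({#A, B#} + \<Gamma>') C"
    using unprovable G4iSLt.AndL \<Gamma> by auto
qed auto

lemma refutable_Or_left:
  assumes IH: "complete_below \<Gamma> C" and unprovable: "\<not> G4iSLt \<Gamma> C"
    and \<Gamma>: "\<Gamma> = add_mset (Or A B) \<Gamma>'"
  shows "refutable \<Gamma> C"
proof -
  have "\<not> G4iSLt (add_mset A \<Gamma>') C \<or> \<not> G4iSLt (add_mset B \<Gamma>') C"
    using unprovable G4iSLt.OrL \<Gamma> by auto
  then obtain D where D: "D = A \<or> D = B" "\<not> G4iSLt ({#D#} + \<Gamma>') C"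
    by auto
  show ?thesis
  proof (rule refutable_if_replaced[OF IH \<Gamma>, where \<Delta>="{#D#}"])
    show "\<not> G4iSLt ({#D#} + \<Gamma>') C"
      by (rule D(2))
  qed (use D(1) in auto)
qed

lemma refutable_Var_Imp_left:
  assumes IH: "complete_below \<Gamma> C" and unprovable: "\<not> G4iSLt \<Gamma> C"
    and \<Gamma>: "\<Gamma> = add_mset (Imp (Var p) B) (add_mset (Var p) \<Gamma>')"
  shows "refutable \<Gamma> C"
proof (rule refutable_if_replaced[OF IH \<Gamma>, where \<Delta>="{#B#}"])
  show "\<not> G4iSLt ({#B#} + add_mset (Var p) \<Gamma>') C"
  proof
    assume "G4iSLt ({#B#} + add_mset (Var p) \<Gamma>') C"
    then have "G4iSLt (add_mset (Var p) (add_mset B \<Gamma>')) C"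
      by (simp add: add_mset_commute)
    then have "G4iSLt (add_mset (Var p) (add_mset (Imp (Var p) B) \<Gamma>')) C"
      by (rule G4iSLt.VarImpL)
    with unprovable \<Gamma> show False
      by (simp add: add_mset_commute)
  qed
  fix M w assume M: "slt_model M" and "sat_all M w {#B#}"
  then have "sat M w B"
    by simp
  then show "sat M w (Imp (Var p) B)"
    by (rule slt_model.sat_Imp_if_sat[OF M])
qed simp

lemma blocked_Var_Imp_left_or_refutable:
  assumes IH: "complete_below \<Gamma> C" and unprovable: "\<not> G4iSLt \<Gamma> C"
    and \<Gamma>: "\<Gamma> = add_mset (Imp (Var p) B) \<Gamma>'"
  shows "blocked_left \<Gamma> (Imp (Var p) B) \<or> refutable \<Gamma> C"
proof (cases "Var p \<in># \<Gamma>'")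
  case True
  then obtain \<Gamma>'' where "\<Gamma>' = add_mset (Var p) \<Gamma>''"
    by (blast dest: multi_member_split)
  with \<Gamma> refutable_Var_Imp_left[OF IH unprovable] show ?thesis
    by blast
next
  case False
  with \<Gamma> show ?thesis
    by simp
qed

lemma refutable_And_Imp_left:
  assumes IH: "complete_below \<Gamma> C" and unprovable: "\<not> G4iSLt \<Gamma> C"
    and \<Gamma>: "\<Gamma> = add_mset (Imp (And A B) D) \<Gamma>'"
  shows "refutable \<Gamma> C"
proof (rule refutable_if_replaced[OF IH \<Gamma>, where \<Delta>="{#Imp A (Imp B D)#}"])
  show "\<not> G4iSLt ({#Imp A (Imp B D)#} + \<Gamma>') C"
    using unprovable G4iSLt.AndImpL[of A B D \<Gamma>' C] \<Gamma> by auto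
  fix M w assume M: "slt_model M" and "sat_all M w {#Imp A (Imp B D)#}"
  then have "sat M w (Imp A (Imp B D))"
    by simp
  then show "sat M w (Imp (And A B) D)"
    by (rule slt_model.sat_Imp_And_if_curried[OF M])
qed simp

lemma refutable_Or_Imp_left:
  assumes IH: "complete_below \<Gamma> C" and unprovable: "\<not> G4iSLt \<Gamma> C"
    and \<Gamma>: "\<Gamma> = add_mset (Imp (Or A B) D) \<Gamma>'"
  shows "refutable \<Gamma> C"
proof (rule refutable_if_replaced[OF IH \<Gamma>, where \<Delta>="{#Imp A D, Imp B D#}"])
  show "\<not> G4iSLt ({#Imp A D, Imp B D#} + \<Gamma>') C"
    using unprovable G4iSLt.OrImpL[of A D B \<Gamma>' C] \<Gamma> by auto
  fix M w assume M: "slt_model M" and "sat_all M w {#Imp A D, Imp B D#}"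
  then have "sat M w (Imp A D)" "sat M w (Imp B D)"
    by simp_all
  then show "sat M w (Imp (Or A B) D)"
    by (rule slt_model.sat_Imp_Or_if[OF M])
qed simp

lemma blocked_left_or_refutable:
  assumes IH: "complete_below \<Gamma> C" and unprovable: "\<not> G4iSLt \<Gamma> C"
    and "X \<in># \<Gamma>"
  shows "blocked_left \<Gamma> X \<or> refutable \<Gamma> C"
proof -
  obtain \<Gamma>' where \<Gamma>: "\<Gamma> = add_mset X \<Gamma>'"
    using multi_member_split[OF \<open>X \<in># \<Gamma>\<close>] by blast
  show ?thesis
  proof (cases X)
    case Bot
    with unprovable \<Gamma> show ?thesis
      using G4iSLt.BotL by simp
  next
    case (And A B)
    with \<Gamma> refutable_And_left[OF IH unprovable] show ?thesis
      by blast
  next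
    case (Or A B)
    with \<Gamma> refutable_Or_left[OF IH unprovable] show ?thesis
      by blast
  next
    case (Imp Y Z)
    show ?thesis
    proof (cases Y)
      case (Var p)
      with \<Gamma> Imp blocked_Var_Imp_left_or_refutable[OF IH unprovable] show ?thesis
        by blast
    next
      case (And A B)
      with \<Gamma> Imp refutable_And_Imp_left[OF IH unprovable] show ?thesis
        by blast
    next
      case (Or A B)
      with \<Gamma> Imp refutable_Or_Imp_left[OF IH unprovable] show ?thesis
        by blast
    next
      case (Imp A B)
      with \<Gamma> \<open>X = Imp Y Z\<close> blocked_Imp_Imp_left_or_refutable[OF IH unprovable] show ?thesis
        by blast
    next
      case (Box A)
      with \<Gamma> Imp blocked_Box_Imp_left_or_refutable[OF IH unprovable] show ?thesis
        by blast
    qed (simp add: Imp)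
  qed simp_all
qed

lemma blocked_Var_right:
  assumes "\<not> G4iSLt \<Gamma> (Var p)"
  shows "blocked_right \<Gamma> (Var p)"
proof -
  have "Var p \<notin># \<Gamma>"
  proof
    assume "Var p \<in># \<Gamma>"
    then obtain \<Gamma>' where "\<Gamma> = add_mset (Var p) \<Gamma>'"
      by (blast dest: multi_member_split)
    with assms show False
      using G4iSLt.IdP by simp
  qed
  then show ?thesis
    by simp
qed

lemma refutable_And_right:
  assumes IH: "complete_below \<Gamma> (And A B)" and unprovable: "\<not> G4iSLt \<Gamma> (And A B)"
  shows "refutable \<Gamma> (And A B)"
proof -
  obtain D where D: "D = A \<or> D = B" "\<not> G4iSLt \<Gamma> D"
    using unprovable G4iSLt.AndR by blast
  have "(sequent_measure ({#} + \<Gamma>) D, sequent_measure ({#} + \<Gamma>) (And A B)) \<in> mult less_than"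
    by (rule sequent_measure_less) (use D(1) in auto)
  then have "refutable \<Gamma> D"
    using complete_belowD[OF IH] D(2) by simp
  then show ?thesis
    by (rule refutable_mono) (use D(1) in auto)
qed

lemma refutable_Imp_right:
  assumes IH: "complete_below \<Gamma> (Imp A B)" and unprovable: "\<not> G4iSLt \<Gamma> (Imp A B)"
  shows "refutable \<Gamma> (Imp A B)"
proof -
  have "\<not> G4iSLt (add_mset A \<Gamma>) B"
    using unprovable G4iSLt.ImpR by blast
  moreover have "(sequent_measure ({#A#} + \<Gamma>) B, sequent_measure ({#} + \<Gamma>) (Imp A B)) \<in> mult less_than"
    by (rule sequent_measure_less) auto
  ultimately have "refutable (add_mset A \<Gamma>) B"
    using complete_belowD[OF IH] by simp
  then show ?thesis
  proof (rule refutable_mono)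
    fix M w assume "slt_model M" "w \<in> worlds M" "sat_all M w (add_mset A \<Gamma>)" "sat M w (Imp A B)"
    then show "sat M w B"
      using slt_model.sat_ImpD by auto
  qed simp
qed

lemma blocked_Or_right:
  assumes IH: "complete_below \<Gamma> (Or A B)" and unprovable: "\<not> G4iSLt \<Gamma> (Or A B)"
  shows "blocked_right \<Gamma> (Or A B)"
proof -
  have "refutable \<Gamma> D" if "D = A \<or> D = B" for D
  proof -
    have "\<not> G4iSLt \<Gamma> D"
      using that unprovable G4iSLt.OrR1 G4iSLt.OrR2 by blast
    moreover have "(sequent_measure ({#} + \<Gamma>) D, sequent_measure ({#} + \<Gamma>) (Or A B)) \<in> mult less_than"
      by (rule sequent_measure_less) (use that in auto)
    ultimately show ?thesis
      using complete_belowD[OF IH] by simp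
  qed
  then show ?thesis
    by simp
qed

lemma blocked_Box_right:
  assumes IH: "complete_below \<Gamma> (Box A)" and unprovable: "\<not> G4iSLt \<Gamma> (Box A)"
  shows "blocked_right \<Gamma> (Box A)"
proof -
  let ?\<Delta> = "nonboxed \<Gamma> + unboxed \<Gamma> + {#Box A#}"
  have "\<not> G4iSLt ?\<Delta> A"
  proof
    assume "G4iSLt ?\<Delta> A"
    then have "G4iSLt (nonboxed \<Gamma> + boxes (unboxed \<Gamma>)) (Box A)"
      by (rule G4iSLt.SLtR[OF box_free_nonboxed])
    with unprovable show False
      by (simp add: nonboxed_boxes_unboxed)
  qed
  moreover have "(sequent_measure ?\<Delta> A, sequent_measure (\<Gamma> + {#}) (Box A)) \<in> mult less_than"
    by (rule sequent_measure_less_unboxed) auto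
  ultimately show ?thesis
    using complete_belowD[OF IH] by simp
qed

lemma blocked_right_or_refutable:
  assumes "complete_below \<Gamma> C" "\<not> G4iSLt \<Gamma> C"
  shows "blocked_right \<Gamma> C \<or> refutable \<Gamma> C"
  using assms blocked_Var_right refutable_And_right blocked_Or_right refutable_Imp_right blocked_Box_right
  by (cases C) simp_all

theorem G4iSLt_refutation_complete: "\<not> G4iSLt \<Gamma> C \<Longrightarrow> refutable \<Gamma> C"
  using wf_mult[OF wf_less_than]
proof (induction "sequent_measure \<Gamma> C" arbitrary: \<Gamma> C rule: wf_induct_rule)
  case less
  then have IH: "complete_below \<Gamma> C"
    unfolding complete_below_def by blast
  show ?case
  proof (cases "\<forall>X\<in>#\<Gamma>. blocked_left \<Gamma> X")
    case True
    then show ?thesis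
      using blocked_right_or_refutable[OF IH less.prems] refutable_if_blocked by blast
  next
    case False
    then show ?thesis
      using blocked_left_or_refutable[OF IH less.prems] by blast
  qed
qed

theorem theorem3:
  fixes \<Gamma> :: "fm multiset" and C :: fm
  assumes "G4iSLt_cut \<Gamma> C"
  shows "G4iSLt \<Gamma> C"
  using assms G4iSLt_refutation_complete not_G4iSLt_cut_if_refutable by blast

end
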